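(* Let $(\Omega,\Sigma,\mu)$ and $(\Delta,\Gamma,\nu)$ be $\sigma$-finite measure spaces, let $X_1(\mu),X_2(\mu)$ be saturated Banach function spaces over $\mu$ and $Y_1(\nu),Y_2(\nu)$ saturated Banach function spaces over $\nu$, and let $T\colon X_1(\mu)\to Y_1(\nu)$ and $S\colon X_2(\mu)\to Y_2(\nu)$ be nontrivial continuous linear operators. Assume that $Y_2^{Y_1''}$ is saturated and let $h\in X_1^{X_2}$. The following are equivalent: (a) There exists a constant $C>0$ such that $$\sum_{i=1}^n\int T(x_i)y_i'\,d\nu\le C\Big\Vert\sum_{i=1}^nS(hx_i)y_i'\Big\Vert_{Y_2\pi Y_1'}$$ for every $n\in\mathbb{N}$, all $x_1,\dots,x_n\in X_1(\mu)$ and all $y_1',\dots,y_n'\in Y_1(\nu)'$. (b) There exists $\xi^*\in(Y_2\pi Y_1')^*$ such that $\eta(T(x))=R_{\xi^*}(S(hx))$ for all $x\in X_1(\mu)$, where $\eta\colon Y_1(\nu)''\to (Y_1(\nu)')^*$ is given by $\langle\eta(f),y'\rangle=\int fy'\,d\nu$ (and $T(x)\in Y_1(\nu)\subset Y_1(\nu)''$), and $R_{\xi^*}\colon Y_2(\nu)\to (Y_1(\nu)')^*$ is the continuous linear operator defined by $\langle R_{\xi^*}(y_2),y_1'\rangle=\langle\xi^*,y_2y_1'\rangle$ for $y_2\in Y_2(\nu)$, $y_1'\in Y_1(\nu)'$.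
   Context: $L^0(\mu)$ denotes the space of ($\mu$-a.e. classes of) measurable real functions. A Banach function space $X(\mu)$ is a Banach space $X(\mu)\subset L^0(\mu)$ with norm $\Vert\cdot\Vert_X$ such that if $f\in L^0(\mu)$, $g\in X(\mu)$ and $|f|\le|g|$ $\mu$-a.e., then $f\in X(\mu)$ and $\Vert f\Vert_X\le\Vert g\Vert_X$. It is saturated if there is no $A\in\Sigma$ with $\mu(A)>0$ and $f\chi_A=0$ a.e. for all $f\in X(\mu)$. For Banach function spaces $X(\mu),Y(\mu)$, the $Y$-dual is $X^Y=\{h\in L^0(\mu): fh\in Y(\mu)\ \forall f\in X(\mu)\}$ with norm $\Vert h\Vert_{X^Y}=\sup_{f\in B_X}\Vert hf\Vert_Y$; the Köthe dual is $X(\mu)'=X^{L^1(\mu)}$ and the Köthe bidual is $X(\mu)''=(X(\mu)')'$ (a saturated $X(\mu)$ is contained in $X(\mu)''$). The $\pi$-product space $X\pi Y$ consists of all $h\in L^0(\mu)$ with $|h|\le\sum_n|f_ng_n|$ a.e. for some $(f_n)\subset X(\mu)$, $(g_n)\subset Y(\mu)$ with $\sum_n\Vert f_n\Vert_X\Vert g_n\Vert_Y<\infty$, normed by $\pi(h)=\inf\sum_n\Vert f_n\Vert_X\Vert g_n\Vert_Y$ over all such representations; $(Y_2\pi Y_1')^*$ is its topological dual. $B_X$ is the closed unit ball. *)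

theory Defs
  imports "HOL-Analysis.Analysis"
begin

text \<open>Functions are represented by representatives; all notions below are invariant
under a.e. equality. A function space is given by a carrier set of real functions
together with a norm.\<close>

definition bfs :: "'a measure \<Rightarrow> ('a \<Rightarrow> real) set \<Rightarrow> (('a \<Rightarrow> real) \<Rightarrow> real) \<Rightarrow> bool" where
  "bfs M X n \<longleftrightarrow>
     X \<subseteq> borel_measurable M \<and>
     (\<lambda>_. 0) \<in> X \<and>
     (\<forall>f\<in>X. \<forall>g\<in>X. (\<lambda>x. f x + g x) \<in> X \<and> n (\<lambda>x. f x + g x) \<le> n f + n g) \<and>
     (\<forall>f\<in>X. \<forall>c::real. (\<lambda>x. c * f x) \<in> X \<and> n (\<lambda>x. c * f x) = \<bar>c\<bar> * n f) \<and>
     (\<forall>f\<in>X. n f = 0 \<longleftrightarrow> (AE x in M. f x = 0)) \<and>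
     (\<forall>f g. f \<in> borel_measurable M \<longrightarrow> g \<in> X \<longrightarrow> (AE x in M. \<bar>f x\<bar> \<le> \<bar>g x\<bar>)
        \<longrightarrow> f \<in> X \<and> n f \<le> n g) \<and>
     (\<forall>F. (\<forall>k. F k \<in> X) \<longrightarrow>
        (\<forall>e>0. \<exists>K. \<forall>i\<ge>K. \<forall>j\<ge>K. n (\<lambda>x. F i x - F j x) < e) \<longrightarrow>
        (\<exists>f\<in>X. (\<lambda>k. n (\<lambda>x. F k x - f x)) \<longlonglongrightarrow> 0))"

definition saturated :: "'a measure \<Rightarrow> ('a \<Rightarrow> real) set \<Rightarrow> bool" where
  "saturated M X \<longleftrightarrow>
     \<not> (\<exists>A\<in>sets M. emeasure M A > 0 \<and> (\<forall>f\<in>X. AE x in M. f x * indicator A x = 0))"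

definition ydual :: "'a measure \<Rightarrow> ('a \<Rightarrow> real) set \<Rightarrow> ('a \<Rightarrow> real) set \<Rightarrow> ('a \<Rightarrow> real) set" where
  "ydual M X Y = {h \<in> borel_measurable M. \<forall>f\<in>X. (\<lambda>x. h x * f x) \<in> Y}"

definition ydual_norm :: "('a \<Rightarrow> real) set \<Rightarrow> (('a \<Rightarrow> real) \<Rightarrow> real) \<Rightarrow> (('a \<Rightarrow> real) \<Rightarrow> real)
    \<Rightarrow> ('a \<Rightarrow> real) \<Rightarrow> real" where
  "ydual_norm X nX nY h = (SUP f\<in>{f\<in>X. nX f \<le> 1}. nY (\<lambda>x. h x * f x))"

definition L1set :: "'a measure \<Rightarrow> ('a \<Rightarrow> real) set" where
  "L1set M = {f \<in> borel_measurable M. integrable M f}"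

definition L1norm :: "'a measure \<Rightarrow> ('a \<Rightarrow> real) \<Rightarrow> real" where
  "L1norm M f = (\<integral>x. \<bar>f x\<bar> \<partial>M)"

definition kothe :: "'a measure \<Rightarrow> ('a \<Rightarrow> real) set \<Rightarrow> ('a \<Rightarrow> real) set" where
  "kothe M X = ydual M X (L1set M)"

definition kothe_norm :: "'a measure \<Rightarrow> ('a \<Rightarrow> real) set \<Rightarrow> (('a \<Rightarrow> real) \<Rightarrow> real)
    \<Rightarrow> ('a \<Rightarrow> real) \<Rightarrow> real" where
  "kothe_norm M X nX = ydual_norm X nX (L1norm M)"

definition pi_rep :: "'a measure \<Rightarrow> ('a \<Rightarrow> real) set \<Rightarrow> (('a \<Rightarrow> real) \<Rightarrow> real)
    \<Rightarrow> ('a \<Rightarrow> real) set \<Rightarrow> (('a \<Rightarrow> real) \<Rightarrow> real) \<Rightarrow> ('a \<Rightarrow> real)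
    \<Rightarrow> (nat \<Rightarrow> 'a \<Rightarrow> real) \<Rightarrow> (nat \<Rightarrow> 'a \<Rightarrow> real) \<Rightarrow> bool" where
  "pi_rep M X nX Y nY h f g \<longleftrightarrow>
     (\<forall>k. f k \<in> X) \<and> (\<forall>k. g k \<in> Y) \<and> summable (\<lambda>k. nX (f k) * nY (g k)) \<and>
     (AE x in M. ennreal \<bar>h x\<bar> \<le> (\<Sum>k. ennreal \<bar>f k x * g k x\<bar>))"

definition pi_set :: "'a measure \<Rightarrow> ('a \<Rightarrow> real) set \<Rightarrow> (('a \<Rightarrow> real) \<Rightarrow> real)
    \<Rightarrow> ('a \<Rightarrow> real) set \<Rightarrow> (('a \<Rightarrow> real) \<Rightarrow> real) \<Rightarrow> ('a \<Rightarrow> real) set" where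
  "pi_set M X nX Y nY = {h \<in> borel_measurable M. \<exists>f g. pi_rep M X nX Y nY h f g}"

definition pi_norm :: "'a measure \<Rightarrow> ('a \<Rightarrow> real) set \<Rightarrow> (('a \<Rightarrow> real) \<Rightarrow> real)
    \<Rightarrow> ('a \<Rightarrow> real) set \<Rightarrow> (('a \<Rightarrow> real) \<Rightarrow> real) \<Rightarrow> ('a \<Rightarrow> real) \<Rightarrow> real" where
  "pi_norm M X nX Y nY h =
     Inf {(\<Sum>k. nX (f k) * nY (g k)) | f g. pi_rep M X nX Y nY h f g}"

definition pi_dual :: "'a measure \<Rightarrow> ('a \<Rightarrow> real) set \<Rightarrow> (('a \<Rightarrow> real) \<Rightarrow> real)
    \<Rightarrow> ('a \<Rightarrow> real) set \<Rightarrow> (('a \<Rightarrow> real) \<Rightarrow> real) \<Rightarrow> (('a \<Rightarrow> real) \<Rightarrow> real) \<Rightarrow> bool" where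
  "pi_dual M X nX Y nY \<xi> \<longleftrightarrow>
     (\<forall>f\<in>pi_set M X nX Y nY. \<forall>g\<in>pi_set M X nX Y nY. \<forall>a b.
        \<xi> (\<lambda>x. a * f x + b * g x) = a * \<xi> f + b * \<xi> g) \<and>
     (\<exists>K. \<forall>f\<in>pi_set M X nX Y nY. \<bar>\<xi> f\<bar> \<le> K * pi_norm M X nX Y nY f)"

definition bfs_op :: "'a measure \<Rightarrow> ('a \<Rightarrow> real) set \<Rightarrow> (('a \<Rightarrow> real) \<Rightarrow> real)
    \<Rightarrow> 'b measure \<Rightarrow> ('b \<Rightarrow> real) set \<Rightarrow> (('b \<Rightarrow> real) \<Rightarrow> real)
    \<Rightarrow> (('a \<Rightarrow> real) \<Rightarrow> ('b \<Rightarrow> real)) \<Rightarrow> bool" where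
  "bfs_op M X nX N Y nY T \<longleftrightarrow>
     (\<forall>f\<in>X. T f \<in> Y) \<and>
     (\<forall>f\<in>X. \<forall>g\<in>X. \<forall>a b. AE y in N. T (\<lambda>x. a * f x + b * g x) y = a * T f y + b * T g y) \<and>
     (\<exists>K. \<forall>f\<in>X. nY (T f) \<le> K * nX f)"

definition nontrivial_op :: "'b measure \<Rightarrow> ('a \<Rightarrow> real) set \<Rightarrow> (('a \<Rightarrow> real) \<Rightarrow> ('b \<Rightarrow> real)) \<Rightarrow> bool" where
  "nontrivial_op N X T \<longleftrightarrow> (\<exists>f\<in>X. \<not> (AE y in N. T f y = 0))"

end

theory Submission
  imports Defs
begin

text \<open>Direction (b) to (a): a bounded linear functional \<open>\<xi>\<close> on \<open>Y2 \<pi> Y1'\<close> turns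
  \<open>\<Sum>i \<integral> T(x_i) y_i\<close> into \<open>\<xi>(\<Sum>i S(h x_i) y_i)\<close>, which is at most \<open>\<parallel>\<xi>\<parallel>\<close> times the
  \<open>\<pi>\<close>-norm. Direction (a) to (b): the inequality says that prescribing the value
  \<open>\<Sum>i \<integral> T(x_i) y_i\<close> at \<open>\<Sum>i S(h x_i) y_i\<close> gives a linear relation dominated by the
  sublinear functional \<open>C \<pi>\<close>, so Hahn-Banach extends it to the required \<open>\<xi>\<close>.
  Behind the sublinearity of \<open>\<pi>\<close> lies the finiteness of the Koethe dual norm, which follows
  from completeness and the lattice property of Y1.\<close>

section \<open>Hahn-Banach for dominated linear relations\<close>

text \<open>Graphs of linear functionals on subspaces of V that lie below p, taken as relations:
  single-valuedness follows from domination.\<close>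
definition dominated_linear_relation ::
    "('b \<Rightarrow> real) set \<Rightarrow> (('b \<Rightarrow> real) \<Rightarrow> real) \<Rightarrow> (('b \<Rightarrow> real) \<times> real) set \<Rightarrow> bool" where
  "dominated_linear_relation V p G \<longleftrightarrow>
     G \<subseteq> V \<times> UNIV \<and> ((\<lambda>_. 0), 0) \<in> G \<and>
     (\<forall>f a g b \<alpha> \<beta>. (f, a) \<in> G \<longrightarrow> (g, b) \<in> G \<longrightarrow> ((\<lambda>x. \<alpha> * f x + \<beta> * g x), \<alpha> * a + \<beta> * b) \<in> G) \<and>
     (\<forall>f a. (f, a) \<in> G \<longrightarrow> a \<le> p f)"

context
  fixes V :: "('b \<Rightarrow> real) set" and p :: "('b \<Rightarrow> real) \<Rightarrow> real"
  assumes V_lincomb: "\<And>f g a b. f \<in> V \<Longrightarrow> g \<in> V \<Longrightarrow> (\<lambda>x. a * f x + b * g x) \<in> V"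
    and p_add: "\<And>f g. f \<in> V \<Longrightarrow> g \<in> V \<Longrightarrow> p (\<lambda>x. f x + g x) \<le> p f + p g"
    and p_scale: "\<And>f c. f \<in> V \<Longrightarrow> c \<ge> 0 \<Longrightarrow> p (\<lambda>x. c * f x) = c * p f"
begin

lemma dominated_linear_relation_lincomb:
  "dominated_linear_relation V p G \<Longrightarrow> (f, a) \<in> G \<Longrightarrow> (g, b) \<in> G \<Longrightarrow>
     ((\<lambda>x. \<alpha> * f x + \<beta> * g x), \<alpha> * a + \<beta> * b) \<in> G"
  unfolding dominated_linear_relation_def by blast

lemma dominated_linear_relation_single_valued:
  assumes G: "dominated_linear_relation V p G" and "(f, a) \<in> G" "(f, b) \<in> G"
  shows "a = b"
proof -
  have "(\<lambda>_. 0) \<in> V" using G unfolding dominated_linear_relation_def by blast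
  then have p0: "p (\<lambda>_. 0) = 0" using p_scale[of "\<lambda>_. 0" 0] by simp
  have "((\<lambda>_. 0), a - b) \<in> G" "((\<lambda>_. 0), b - a) \<in> G"
    using dominated_linear_relation_lincomb[OF G assms(2,3), of 1 "-1"]
      dominated_linear_relation_lincomb[OF G assms(3,2), of 1 "-1"] by simp_all
  then have "a - b \<le> 0" "b - a \<le> 0"
    using G p0 unfolding dominated_linear_relation_def by fastforce+
  then show ?thesis by simp
qed

lemma dominated_linear_relation_adjoin_le:
  assumes G: "dominated_linear_relation V p G" and x0: "x0 \<in> V"
    and c_ge: "\<And>f a. (f, a) \<in> G \<Longrightarrow> a - p (\<lambda>x. f x - x0 x) \<le> c"
    and c_le: "\<And>f a. (f, a) \<in> G \<Longrightarrow> c \<le> p (\<lambda>x. f x + x0 x) - a"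
    and fa: "(f, a) \<in> G"
  shows "a + t * c \<le> p (\<lambda>x. f x + t * x0 x)"
proof -
  have G_scale: "((\<lambda>x. s * f x), s * a) \<in> G" for s
    using dominated_linear_relation_lincomb[OF G fa fa, of s 0] by simp
  have f_V: "(\<lambda>x. s * f x + r * x0 x) \<in> V" for s r
    using G fa x0 V_lincomb unfolding dominated_linear_relation_def by blast
  show ?thesis
  proof (cases t "0 :: real" rule: linorder_cases)
    case less
    have "(-1/t) * a - p (\<lambda>x. (-1/t) * f x - x0 x) \<le> c"
      using c_ge[OF G_scale[of "-1/t"]] by simp
    then have "-t * ((-1/t) * a - p (\<lambda>x. (-1/t) * f x - x0 x)) \<le> -t * c"
      using less by (intro mult_left_mono) auto
    moreover have "p (\<lambda>x. -t * ((-1/t) * f x - x0 x)) = -t * p (\<lambda>x. (-1/t) * f x - x0 x)"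
      using less f_V[of "-1/t" "-1"] by (intro p_scale) auto
    moreover have "(\<lambda>x. -t * ((-1/t) * f x - x0 x)) = (\<lambda>x. f x + t * x0 x)"
      using less by (auto simp: field_simps)
    ultimately show ?thesis using less by (simp add: algebra_simps)
  next
    case equal
    then show ?thesis using G fa unfolding dominated_linear_relation_def by simp
  next
    case greater
    have "c \<le> p (\<lambda>x. (1/t) * f x + x0 x) - (1/t) * a"
      using c_le[OF G_scale[of "1/t"]] .
    then have "t * c \<le> t * (p (\<lambda>x. (1/t) * f x + x0 x) - (1/t) * a)"
      using greater by (intro mult_left_mono) auto
    moreover have "p (\<lambda>x. t * ((1/t) * f x + x0 x)) = t * p (\<lambda>x. (1/t) * f x + x0 x)"
      using greater f_V[of "1/t" 1] by (intro p_scale) auto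
    moreover have "(\<lambda>x. t * ((1/t) * f x + x0 x)) = (\<lambda>x. f x + t * x0 x)"
      using greater by (auto simp: field_simps)
    ultimately show ?thesis using greater by (simp add: algebra_simps)
  qed
qed

lemma dominated_linear_relation_adjoin:
  assumes G: "dominated_linear_relation V p G" and x0: "x0 \<in> V"
    and c_ge: "\<And>f a. (f, a) \<in> G \<Longrightarrow> a - p (\<lambda>x. f x - x0 x) \<le> c"
    and c_le: "\<And>f a. (f, a) \<in> G \<Longrightarrow> c \<le> p (\<lambda>x. f x + x0 x) - a"
  shows "dominated_linear_relation V p {((\<lambda>x. f x + t * x0 x), a + t * c) | f a t. (f, a) \<in> G}"
    (is "dominated_linear_relation V p ?G'")
  unfolding dominated_linear_relation_def
proof (intro conjI allI impI)
  show "?G' \<subseteq> V \<times> UNIV"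
    using G V_lincomb[OF _ x0, of _ 1] unfolding dominated_linear_relation_def by fastforce
  show "((\<lambda>_. 0), 0) \<in> ?G'"
    using G unfolding dominated_linear_relation_def by force
next
  fix f a g b \<alpha> \<beta> assume "(f, a) \<in> ?G'" "(g, b) \<in> ?G'"
  then obtain f1 a1 t g1 b1 s where
    f: "f = (\<lambda>x. f1 x + t * x0 x)" "a = a1 + t * c" "(f1, a1) \<in> G" and
    g: "g = (\<lambda>x. g1 x + s * x0 x)" "b = b1 + s * c" "(g1, b1) \<in> G"
    by blast
  have G'_intro: "((\<lambda>x. h x + r * x0 x), e + r * c) \<in> ?G'" if "(h, e) \<in> G" for h e r
    using that by blast
  have "((\<lambda>x. (\<alpha> * f1 x + \<beta> * g1 x) + (\<alpha> * t + \<beta> * s) * x0 x),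
      (\<alpha> * a1 + \<beta> * b1) + (\<alpha> * t + \<beta> * s) * c) \<in> ?G'"
    by (rule G'_intro[OF dominated_linear_relation_lincomb[OF G f(3) g(3)]])
  then show "((\<lambda>x. \<alpha> * f x + \<beta> * g x), \<alpha> * a + \<beta> * b) \<in> ?G'"
    unfolding f g by (simp add: algebra_simps)
next
  fix f a assume "(f, a) \<in> ?G'"
  then show "a \<le> p f" using dominated_linear_relation_adjoin_le[OF G x0 c_ge c_le] by blast
qed

lemma dominated_linear_relation_extend:
  assumes G: "dominated_linear_relation V p G" and x0: "x0 \<in> V"
  shows "\<exists>G'. dominated_linear_relation V p G' \<and> G \<subseteq> G' \<and> x0 \<in> fst ` G'"
proof -
  have G_zero: "((\<lambda>_. 0), 0) \<in> G"
    using G unfolding dominated_linear_relation_def by blast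
  have gap: "a - p (\<lambda>x. f x - x0 x) \<le> p (\<lambda>x. g x + x0 x) - b"
    if "(f, a) \<in> G" "(g, b) \<in> G" for f a g b
  proof -
    have "a + b \<le> p (\<lambda>x. f x + g x)"
      using G dominated_linear_relation_lincomb[OF G that, of 1 1]
      unfolding dominated_linear_relation_def by fastforce
    also have "(\<lambda>x. f x + g x) = (\<lambda>x. (f x - x0 x) + (g x + x0 x))" by simp
    also have "p \<dots> \<le> p (\<lambda>x. f x - x0 x) + p (\<lambda>x. g x + x0 x)"
      using G that V_lincomb[OF _ x0, of _ 1 "-1"] V_lincomb[OF _ x0, of _ 1 1]
      unfolding dominated_linear_relation_def by (intro p_add) auto
    finally show ?thesis by simp
  qed
  define c where "c = (SUP (f, a)\<in>G. a - p (\<lambda>x. f x - x0 x))"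
  have c_ge: "a - p (\<lambda>x. f x - x0 x) \<le> c" if "(f, a) \<in> G" for f a
    unfolding c_def using that gap[OF _ G_zero]
    by (intro cSUP_upper2[where x="(f, a)"]) (auto intro!: bdd_aboveI2)
  have c_le: "c \<le> p (\<lambda>x. g x + x0 x) - b" if "(g, b) \<in> G" for g b
    unfolding c_def using G_zero gap[OF _ that] by (intro cSUP_least) auto
  let ?G' = "{((\<lambda>x. f x + t * x0 x), a + t * c) | f a t. (f, a) \<in> G}"
  have "G \<subseteq> ?G'"
  proof
    fix q assume "q \<in> G"
    then show "q \<in> ?G'" by (cases q) force
  qed
  moreover have "x0 \<in> fst ` ?G'"
    using G_zero by force
  ultimately show ?thesis
    using dominated_linear_relation_adjoin[OF G x0 c_ge c_le] by blast
qed

lemma dominated_linear_relation_Union_chain: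
  assumes "C \<noteq> {}" "chain\<^sub>\<subseteq> C" and C: "\<And>G. G \<in> C \<Longrightarrow> dominated_linear_relation V p G"
  shows "dominated_linear_relation V p (\<Union>C)"
  unfolding dominated_linear_relation_def
proof (intro conjI allI impI)
  show "\<Union>C \<subseteq> V \<times> UNIV" using C unfolding dominated_linear_relation_def by blast
  show "((\<lambda>_. 0), 0) \<in> \<Union>C" using assms(1) C unfolding dominated_linear_relation_def by blast
next
  fix f a g b \<alpha> \<beta> assume "(f, a) \<in> \<Union>C" "(g, b) \<in> \<Union>C"
  then obtain G H where GH: "G \<in> C" "H \<in> C" "(f, a) \<in> G" "(g, b) \<in> H" by blast
  from assms(2) GH(1,2) have "G \<subseteq> H \<or> H \<subseteq> G" unfolding chain_subset_def by blast
  then obtain K where "K \<in> C" "(f, a) \<in> K" "(g, b) \<in> K" using GH by blast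
  then show "((\<lambda>x. \<alpha> * f x + \<beta> * g x), \<alpha> * a + \<beta> * b) \<in> \<Union>C"
    using dominated_linear_relation_lincomb[OF C] by blast
next
  fix f a assume "(f, a) \<in> \<Union>C"
  then show "a \<le> p f" using C unfolding dominated_linear_relation_def by blast
qed

lemma dominated_linear_relation_total_extension:
  assumes "dominated_linear_relation V p G"
  obtains M where "dominated_linear_relation V p M" "G \<subseteq> M" "\<And>f. f \<in> V \<Longrightarrow> \<exists>a. (f, a) \<in> M"
proof -
  define A where "A = {H. dominated_linear_relation V p H \<and> G \<subseteq> H}"
  have "\<exists>M\<in>A. \<forall>H\<in>A. M \<subseteq> H \<longrightarrow> H = M"
  proof (rule Zorn_Lemma2, intro ballI)
    fix C assume C: "C \<in> chains A"
    show "\<exists>U\<in>A. \<forall>H\<in>C. H \<subseteq> U"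
    proof (cases "C = {}")
      case True
      then show ?thesis using assms unfolding A_def by blast
    next
      case False
      from C have "chain\<^sub>\<subseteq> C" "C \<subseteq> A" unfolding chains_def by auto
      with False have "\<Union>C \<in> A"
        using dominated_linear_relation_Union_chain[of C] unfolding A_def by blast
      then show ?thesis by blast
    qed
  qed
  then obtain M where "M \<in> A" and M_max': "\<forall>H\<in>A. M \<subseteq> H \<longrightarrow> H = M" ..
  then have M: "dominated_linear_relation V p M" "G \<subseteq> M" unfolding A_def by auto
  have M_max: "H = M" if "dominated_linear_relation V p H" "M \<subseteq> H" for H
    using M_max' that M(2) unfolding A_def by blast
  have "\<exists>a. (f, a) \<in> M" if "f \<in> V" for f
  proof (rule ccontr)
    assume "\<nexists>a. (f, a) \<in> M"
    then have "f \<notin> fst ` M" by force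
    with dominated_linear_relation_extend[OF M(1) that] obtain H
      where "dominated_linear_relation V p H" "M \<subseteq> H" "f \<in> fst ` H" by blast
    with M_max \<open>f \<notin> fst ` M\<close> show False by blast
  qed
  with M that show thesis by blast
qed

theorem hahn_banach_dominated_extension:
  assumes "dominated_linear_relation V p G"
  obtains \<xi> where "\<And>f g a b. f \<in> V \<Longrightarrow> g \<in> V \<Longrightarrow> \<xi> (\<lambda>x. a * f x + b * g x) = a * \<xi> f + b * \<xi> g"
    and "\<And>f. f \<in> V \<Longrightarrow> \<xi> f \<le> p f" and "\<And>f a. (f, a) \<in> G \<Longrightarrow> \<xi> f = a"
proof -
  obtain M where M: "dominated_linear_relation V p M" "G \<subseteq> M"
    and M_total: "\<And>f. f \<in> V \<Longrightarrow> \<exists>a. (f, a) \<in> M"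
    using dominated_linear_relation_total_extension[OF assms] by blast
  define \<xi> where "\<xi> f = (THE a. (f, a) \<in> M)" for f
  have \<xi>_eq: "\<xi> f = a" if "(f, a) \<in> M" for f a
    unfolding \<xi>_def
    by (rule the_equality[where P="\<lambda>a. (f, a) \<in> M", OF that])
      (rule dominated_linear_relation_single_valued[OF M(1) _ that])
  have \<xi>_M: "(f, \<xi> f) \<in> M" if "f \<in> V" for f
    using M_total[OF that] \<xi>_eq by fastforce
  show thesis
  proof
    fix f g a b assume "f \<in> V" "g \<in> V"
    then show "\<xi> (\<lambda>x. a * f x + b * g x) = a * \<xi> f + b * \<xi> g"
      by (rule \<xi>_eq[OF dominated_linear_relation_lincomb[OF M(1) \<xi>_M \<xi>_M]])
  next
    fix f assume "f \<in> V"
    then show "\<xi> f \<le> p f" using M(1) \<xi>_M unfolding dominated_linear_relation_def by blast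
  next
    fix f a assume "(f, a) \<in> G"
    then show "\<xi> f = a" using \<xi>_eq M(2) by blast
  qed
qed

end

section \<open>Banach function spaces and the Koethe dual\<close>

context
  fixes M :: "'a measure" and X :: "('a \<Rightarrow> real) set" and n :: "('a \<Rightarrow> real) \<Rightarrow> real"
  assumes B: "bfs M X n"
begin

lemma bfs_measurable: "f \<in> X \<Longrightarrow> f \<in> borel_measurable M"
  using B unfolding bfs_def by blast

lemma bfs_zero: "(\<lambda>_. 0) \<in> X"
  using B unfolding bfs_def by blast

lemma bfs_add: "f \<in> X \<Longrightarrow> g \<in> X \<Longrightarrow> (\<lambda>x. f x + g x) \<in> X \<and> n (\<lambda>x. f x + g x) \<le> n f + n g"
  using B unfolding bfs_def by blast

lemma bfs_scale: "f \<in> X \<Longrightarrow> (\<lambda>x. c * f x) \<in> X \<and> n (\<lambda>x. c * f x) = \<bar>c\<bar> * n f"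
  using B unfolding bfs_def by blast

lemma bfs_norm_eq_0_iff: "f \<in> X \<Longrightarrow> n f = 0 \<longleftrightarrow> (AE x in M. f x = 0)"
  using B unfolding bfs_def by blast

lemma bfs_lattice:
  "f \<in> borel_measurable M \<Longrightarrow> g \<in> X \<Longrightarrow> (AE x in M. \<bar>f x\<bar> \<le> \<bar>g x\<bar>) \<Longrightarrow> f \<in> X \<and> n f \<le> n g"
  using B unfolding bfs_def by blast

lemma bfs_complete:
  "(\<And>k. F k \<in> X) \<Longrightarrow> (\<And>e. e > 0 \<Longrightarrow> \<exists>K. \<forall>i\<ge>K. \<forall>j\<ge>K. n (\<lambda>x. F i x - F j x) < e) \<Longrightarrow>
     \<exists>f\<in>X. (\<lambda>k. n (\<lambda>x. F k x - f x)) \<longlonglongrightarrow> 0"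
  using B unfolding bfs_def by blast

lemma bfs_norm_zero: "n (\<lambda>_. 0) = 0"
  using bfs_norm_eq_0_iff[OF bfs_zero] by simp

lemma bfs_diff: "f \<in> X \<Longrightarrow> g \<in> X \<Longrightarrow> (\<lambda>x. f x - g x) \<in> X"
  using bfs_add[of f "\<lambda>x. (-1) * g x"] bfs_scale[of g "-1"] by simp

lemma bfs_norm_minus_commute:
  assumes "f \<in> X" "g \<in> X"
  shows "n (\<lambda>x. f x - g x) = n (\<lambda>x. g x - f x)"
  using bfs_scale[OF bfs_diff[OF assms], of "-1"] by simp

lemma bfs_norm_nonneg:
  assumes "f \<in> X"
  shows "0 \<le> n f"
proof -
  have "n (\<lambda>x. f x + (-1) * f x) \<le> n f + n (\<lambda>x. (-1) * f x)"
    using bfs_add[OF assms] bfs_scale[OF assms] by blast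
  then show ?thesis using bfs_scale[OF assms, of "-1"] bfs_norm_zero by simp
qed

lemma bfs_sum:
  assumes "finite I" "\<And>i. i \<in> I \<Longrightarrow> f i \<in> X"
  shows "(\<lambda>x. \<Sum>i\<in>I. c i * f i x) \<in> X \<and> n (\<lambda>x. \<Sum>i\<in>I. c i * f i x) \<le> (\<Sum>i\<in>I. \<bar>c i\<bar> * n (f i))"
  using assms
proof (induction I rule: finite_induct)
  case empty
  then show ?case using bfs_zero bfs_norm_zero by simp
next
  case (insert i I)
  then show ?case
    using bfs_add[of "\<lambda>x. c i * f i x" "\<lambda>x. \<Sum>i\<in>I. c i * f i x"] bfs_scale[of "f i" "c i"] by auto
qed

text \<open>For m \<ge> k the positive part of \<open>F k - f\<close> is below \<open>|F m - f|\<close>, so by the lattice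
  property its norm is 0.\<close>
lemma bfs_incseq_le_limit:
  assumes F: "\<And>k. F k \<in> X" and f: "f \<in> X"
    and mono: "\<And>k m x. k \<le> m \<Longrightarrow> F k x \<le> F m x"
    and lim: "(\<lambda>k. n (\<lambda>x. F k x - f x)) \<longlonglongrightarrow> 0"
  shows "AE x in M. F k x \<le> f x"
proof -
  define d where "d x = max (F k x - f x) 0" for x
  have d_meas: "d \<in> borel_measurable M"
    unfolding d_def using bfs_measurable[OF F] bfs_measurable[OF f] by measurable
  have d_le: "d \<in> X \<and> n d \<le> n (\<lambda>x. F m x - f x)" if "k \<le> m" for m
  proof (rule bfs_lattice[OF d_meas bfs_diff[OF F f]])
    show "AE x in M. \<bar>d x\<bar> \<le> \<bar>F m x - f x\<bar>"
    proof (rule AE_I2)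
      fix x
      have "F k x \<le> F m x" by (rule mono[OF that])
      then show "\<bar>d x\<bar> \<le> \<bar>F m x - f x\<bar>" by (simp add: d_def max_def abs_if)
    qed
  qed
  have "n d \<le> 0"
    by (rule LIMSEQ_le_const[OF lim]) (use d_le in blast)
  with d_le[of k] bfs_norm_nonneg have "n d = 0" by force
  with d_le[of k] have "AE x in M. d x = 0" using bfs_norm_eq_0_iff by blast
  then show ?thesis by eventually_elim (simp add: d_def)
qed

lemma sum_power_half_atLeastLessThan:
  "i \<le> j \<Longrightarrow> (\<Sum>k\<in>{i..<j}. (1/2::real) ^ k) = 2 * (1/2) ^ i - 2 * (1/2) ^ j"
  by (induction j rule: dec_induct) (simp_all add: sum.atLeastLessThan_Suc)

lemma bfs_geometric_series_limit:
  assumes a: "\<And>k. a k \<in> X" "\<And>k. n (a k) \<le> 1"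
  obtains f where "f \<in> X" "(\<lambda>k. n (\<lambda>x. (\<Sum>i<k. (1/2) ^ i * a i x) - f x)) \<longlonglongrightarrow> 0"
proof -
  define F where "F k x = (\<Sum>i<k. (1/2::real) ^ i * a i x)" for k x
  have F_X: "F k \<in> X" for k
    unfolding F_def using bfs_sum[of "{..<k}" a] a by auto
  have F_diff: "n (\<lambda>x. F j x - F i x) \<le> 2 * (1/2) ^ i" if "i \<le> j" for i j
  proof -
    have "(\<lambda>x. F j x - F i x) = (\<lambda>x. \<Sum>k\<in>{i..<j}. (1/2::real) ^ k * a k x)"
      unfolding F_def lessThan_atLeast0 by (simp add: sum_diff_nat_ivl[of 0 i j, OF _ that])
    then have "n (\<lambda>x. F j x - F i x) \<le> (\<Sum>k\<in>{i..<j}. \<bar>(1/2::real) ^ k\<bar> * n (a k))"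
      using bfs_sum[of "{i..<j}" a "\<lambda>k. (1/2) ^ k"] a by simp
    also have "\<dots> \<le> (\<Sum>k\<in>{i..<j}. (1/2::real) ^ k)"
      using a(2) by (intro sum_mono) (simp add: mult_left_le)
    also have "\<dots> \<le> 2 * (1/2) ^ i"
      unfolding sum_power_half_atLeastLessThan[OF that] by simp
    finally show ?thesis .
  qed
  have "\<exists>f\<in>X. (\<lambda>k. n (\<lambda>x. F k x - f x)) \<longlonglongrightarrow> 0"
  proof (rule bfs_complete[OF F_X])
    fix e :: real assume "e > 0"
    then obtain K where K: "(1/2::real) ^ K < e / 2"
      using real_arch_pow_inv[of "e/2" "1/2"] by auto
    have "n (\<lambda>x. F i x - F j x) < e" if "K \<le> i" "K \<le> j" for i j
    proof -
      have "n (\<lambda>x. F i x - F j x) \<le> 2 * (1/2) ^ min i j"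
        using F_diff[of i j] F_diff[of j i] bfs_norm_minus_commute[OF F_X F_X, of i j]
        by (cases "i \<le> j") (simp_all add: min_def)
      also have "(1/2::real) ^ min i j \<le> (1/2) ^ K"
        using that by (intro power_decreasing) auto
      finally show ?thesis using K by simp
    qed
    then show "\<exists>K. \<forall>i\<ge>K. \<forall>j\<ge>K. n (\<lambda>x. F i x - F j x) < e" by blast
  qed
  then obtain f where "f \<in> X" "(\<lambda>k. n (\<lambda>x. F k x - f x)) \<longlonglongrightarrow> 0" by blast
  then show ?thesis by (intro that) (simp_all add: F_def)
qed

lemma bfs_geometric_majorant:
  assumes a: "\<And>k. a k \<in> X" "\<And>k. n (a k) \<le> 1" "\<And>k x. 0 \<le> a k x"
  obtains f where "f \<in> X" "\<And>k. AE x in M. (1/2) ^ k * a k x \<le> f x"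
proof -
  define F where "F k x = (\<Sum>i<k. (1/2::real) ^ i * a i x)" for k x
  obtain f where f: "f \<in> X" and "(\<lambda>k. n (\<lambda>x. (\<Sum>i<k. (1/2) ^ i * a i x) - f x)) \<longlonglongrightarrow> 0"
    using bfs_geometric_series_limit[OF a(1,2)] .
  then have lim: "(\<lambda>k. n (\<lambda>x. F k x - f x)) \<longlonglongrightarrow> 0" by (simp add: F_def)
  have F_X: "F k \<in> X" for k
    unfolding F_def using bfs_sum[of "{..<k}" a] a by auto
  have F_mono: "F i x \<le> F m x" if "i \<le> m" for i m x
    unfolding F_def using that a(3) by (intro sum_mono2) auto
  have "AE x in M. (1/2) ^ k * a k x \<le> f x" for k
  proof -
    have "(1/2) ^ k * a k x \<le> F (Suc k) x" for x
      unfolding F_def using a(3) by (simp add: sum_nonneg)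
    with bfs_incseq_le_limit[OF F_X f F_mono lim, of "Suc k"] show ?thesis
      by (auto elim: eventually_mono intro: order.trans)
  qed
  with f that show ?thesis by blast
qed

end

lemma kothe_iff: "g \<in> kothe N Y \<longleftrightarrow> g \<in> borel_measurable N \<and> (\<forall>f\<in>Y. integrable N (\<lambda>x. g x * f x))"
  unfolding kothe_def ydual_def L1set_def by auto

lemma kothe_zero: "(\<lambda>_. 0) \<in> kothe N Y"
  unfolding kothe_iff by simp

lemma kothe_scale: "g \<in> kothe N Y \<Longrightarrow> (\<lambda>x. c * g x) \<in> kothe N Y"
  unfolding kothe_iff by (auto simp: mult.assoc)

text \<open>Were the Koethe norm of g infinite, unit vectors f_k with \<open>\<integral>|g f_k| > 4^k\<close> and a
  common majorant f of all \<open>2^-k |f_k|\<close> would give \<open>\<integral>|g f| \<ge> 2^k\<close> for every k.\<close>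
lemma kothe_norm_bdd_above:
  assumes B: "bfs N Y nY" and g: "g \<in> kothe N Y"
  shows "bdd_above ((\<lambda>f. L1norm N (\<lambda>x. g x * f x)) ` {f\<in>Y. nY f \<le> 1})"
proof (rule ccontr)
  assume "\<not> ?thesis"
  then have "\<not> (\<forall>r\<in>(\<lambda>f. L1norm N (\<lambda>x. g x * f x)) ` {f\<in>Y. nY f \<le> 1}. r \<le> 4 ^ k)" for k :: nat
    unfolding bdd_above_def by blast
  then have "\<exists>f. f \<in> Y \<and> nY f \<le> 1 \<and> 4 ^ k < L1norm N (\<lambda>x. g x * f x)" for k :: nat
    by (auto simp: not_le)
  then obtain \<phi> where \<phi>: "\<And>k. \<phi> k \<in> Y" "\<And>k. nY (\<phi> k) \<le> 1"
    "\<And>k. 4 ^ k < L1norm N (\<lambda>x. g x * \<phi> k x)"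
    by metis
  define a where "a k x = \<bar>\<phi> k x\<bar>" for k x
  have a: "a k \<in> Y \<and> nY (a k) \<le> 1" for k
  proof -
    have "a k \<in> borel_measurable N"
      unfolding a_def using bfs_measurable[OF B \<phi>(1)] by measurable
    then have "a k \<in> Y \<and> nY (a k) \<le> nY (\<phi> k)"
      by (rule bfs_lattice[OF B _ \<phi>(1)]) (simp add: a_def)
    then show ?thesis using \<phi>(2)[of k] by simp
  qed
  obtain f where f: "f \<in> Y" and f_maj: "\<And>k. AE x in N. (1/2) ^ k * a k x \<le> f x"
    using bfs_geometric_majorant[OF B, of a] a by (auto simp: a_def)
  have g_int: "integrable N (\<lambda>x. g x * h x)" if "h \<in> Y" for h
    using g that unfolding kothe_iff by blast
  have "2 ^ k < L1norm N (\<lambda>x. g x * f x)" for k :: nat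
  proof -
    have "(2::real) ^ k = (1/2) ^ k * 4 ^ k"
      by (simp add: power_mult_distrib[symmetric])
    also have "\<dots> < (1/2) ^ k * L1norm N (\<lambda>x. g x * \<phi> k x)"
      using \<phi>(3)[of k] by simp
    also have "\<dots> = (\<integral>x. (1/2) ^ k * \<bar>g x * \<phi> k x\<bar> \<partial>N)"
      unfolding L1norm_def by simp
    also have "\<dots> \<le> (\<integral>x. \<bar>g x * f x\<bar> \<partial>N)"
    proof (rule integral_mono_AE)
      show "AE x in N. (1/2) ^ k * \<bar>g x * \<phi> k x\<bar> \<le> \<bar>g x * f x\<bar>"
        using f_maj[of k] by eventually_elim
          (auto simp: a_def abs_mult mult.left_commute intro: mult_left_mono)
    qed (use g_int[OF \<phi>(1)] g_int[OF f] in auto)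
    finally show ?thesis unfolding L1norm_def .
  qed
  moreover obtain k :: nat where "L1norm N (\<lambda>x. g x * f x) < 2 ^ k"
    using real_arch_pow[of 2] by auto
  ultimately show False using less_asym by blast
qed

lemma kothe_norm_nonneg:
  assumes "bfs N Y nY" "g \<in> kothe N Y"
  shows "0 \<le> kothe_norm N Y nY g"
proof -
  have "(\<lambda>_. 0) \<in> {f\<in>Y. nY f \<le> 1}"
    using bfs_zero[OF assms(1)] bfs_norm_zero[OF assms(1)] by simp
  from cSUP_upper[OF this kothe_norm_bdd_above[OF assms]] show ?thesis
    unfolding kothe_norm_def ydual_norm_def L1norm_def by simp
qed

section \<open>The \<open>\<pi>\<close>-product space\<close>

lemma sum_lessThan_interleave:
  "(\<Sum>k<2 * m. if even k then f (k div 2) else g (k div 2)) = (\<Sum>k<m. f k + g k)"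
  for f g :: "nat \<Rightarrow> 'a::comm_monoid_add"
  by (induction m) (simp_all add: add.assoc)

lemma sums_interleave_grouped:
  assumes "(\<lambda>k. if even k then f (k div 2) else g (k div 2)) sums s"
  shows "(\<lambda>k. f k + g k) sums s"
proof -
  have "{k * 2..<k * 2 + 2} = {2 * k, Suc (2 * k)}" for k by auto
  with sums_group[OF assms, of 2] show ?thesis by simp
qed

lemma suminf_interleave_ennreal:
  fixes f g :: "nat \<Rightarrow> ennreal"
  shows "(\<Sum>k. if even k then f (k div 2) else g (k div 2)) = (\<Sum>k. f k) + (\<Sum>k. g k)"
proof -
  have "(\<lambda>k. f k + g k) sums (\<Sum>k. if even k then f (k div 2) else g (k div 2))"
    by (rule sums_interleave_grouped[OF summable_sums[OF summableI]])
  then show ?thesis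
    using suminf_add[OF summableI summableI, of f g] sums_unique by metis
qed

lemma sums_interleave_nonneg:
  fixes f g :: "nat \<Rightarrow> real"
  assumes "\<And>k. 0 \<le> f k" "\<And>k. 0 \<le> g k" "summable f" "summable g"
  shows "(\<lambda>k. if even k then f (k div 2) else g (k div 2)) sums (suminf f + suminf g)"
proof -
  let ?h = "\<lambda>k. if even k then f (k div 2) else g (k div 2)"
  have "summable ?h"
  proof (rule summableI_nonneg_bounded)
    fix m
    have "(\<Sum>k<m. ?h k) \<le> (\<Sum>k<2 * m. ?h k)"
      using assms(1,2) by (intro sum_mono2) auto
    also have "\<dots> = (\<Sum>k<m. f k + g k)" by (rule sum_lessThan_interleave)
    also have "\<dots> \<le> (\<Sum>k. f k + g k)"
      using assms by (intro sum_le_suminf summable_add) (auto intro: add_nonneg_nonneg)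
    finally show "(\<Sum>k<m. ?h k) \<le> (\<Sum>k. f k + g k)" .
  qed (use assms(1,2) in auto)
  then have "(\<lambda>k. f k + g k) sums suminf ?h"
    by (intro sums_interleave_grouped summable_sums)
  then show ?thesis
    using sums_add[OF summable_sums[OF assms(3)] summable_sums[OF assms(4)]] sums_unique2
    by (metis summable_sums \<open>summable ?h\<close>)
qed

text \<open>Z is not assumed to be a Banach function space: it will be the Koethe dual of Y1,
  of which only the properties below are needed.\<close>
locale pi_product =
  fixes N :: "'b measure"
    and Y :: "('b \<Rightarrow> real) set" and nY :: "('b \<Rightarrow> real) \<Rightarrow> real"
    and Z :: "('b \<Rightarrow> real) set" and nZ :: "('b \<Rightarrow> real) \<Rightarrow> real"
  assumes Y_bfs: "bfs N Y nY" and Z_measurable: "Z \<subseteq> borel_measurable N"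
    and Z_zero: "(\<lambda>_. 0) \<in> Z" and Z_norm_nonneg: "\<And>g. g \<in> Z \<Longrightarrow> 0 \<le> nZ g"
begin

abbreviation "rep \<equiv> pi_rep N Y nY Z nZ"
abbreviation "PS \<equiv> pi_set N Y nY Z nZ"
abbreviation "pn \<equiv> pi_norm N Y nY Z nZ"

lemma rep_cost_nonneg: "rep u f g \<Longrightarrow> 0 \<le> (\<Sum>k. nY (f k) * nZ (g k))"
  unfolding pi_rep_def using bfs_norm_nonneg[OF Y_bfs] Z_norm_nonneg by (auto intro!: suminf_nonneg)

lemma rep_finite_sum:
  fixes n :: nat
  assumes "\<And>i. i < n \<Longrightarrow> f i \<in> Y" "\<And>i. i < n \<Longrightarrow> g i \<in> Z"
  shows "rep (\<lambda>x. \<Sum>i<n. f i x * g i x)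
    (\<lambda>k. if k < n then f k else (\<lambda>_. 0)) (\<lambda>k. if k < n then g k else (\<lambda>_. 0))"
  unfolding pi_rep_def
proof (intro conjI allI)
  fix k
  show "(if k < n then f k else (\<lambda>_. 0)) \<in> Y" using assms(1) bfs_zero[OF Y_bfs] by auto
  show "(if k < n then g k else (\<lambda>_. 0)) \<in> Z" using assms(2) Z_zero by auto
next
  show "summable (\<lambda>k. nY (if k < n then f k else (\<lambda>_. 0)) * nZ (if k < n then g k else (\<lambda>_. 0)))"
    by (rule summable_finite[of "{..<n}"]) (auto simp: bfs_norm_zero[OF Y_bfs])
next
  have "ennreal \<bar>\<Sum>i<n. f i x * g i x\<bar> \<le>
      (\<Sum>k. ennreal \<bar>(if k < n then f k else (\<lambda>_. 0)) x * (if k < n then g k else (\<lambda>_. 0)) x\<bar>)" for x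
  proof -
    have "ennreal \<bar>\<Sum>i<n. f i x * g i x\<bar> \<le> ennreal (\<Sum>k<n. \<bar>f k x * g k x\<bar>)"
      by (intro ennreal_leI sum_abs)
    also have "\<dots> = (\<Sum>k<n. ennreal \<bar>f k x * g k x\<bar>)" by (simp add: sum_ennreal)
    also have "\<dots> = (\<Sum>k. ennreal \<bar>(if k < n then f k else (\<lambda>_. 0)) x * (if k < n then g k else (\<lambda>_. 0)) x\<bar>)"
      by (subst suminf_finite[of "{..<n}"]) auto
    finally show ?thesis .
  qed
  then show "AE x in N. ennreal \<bar>\<Sum>i<n. f i x * g i x\<bar> \<le>
      (\<Sum>k. ennreal \<bar>(if k < n then f k else (\<lambda>_. 0)) x * (if k < n then g k else (\<lambda>_. 0)) x\<bar>)"
    by simp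
qed

lemma PS_finite_sum:
  fixes n :: nat
  assumes "\<And>i. i < n \<Longrightarrow> f i \<in> Y" "\<And>i. i < n \<Longrightarrow> g i \<in> Z"
  shows "(\<lambda>x. \<Sum>i<n. f i x * g i x) \<in> PS"
proof -
  have "f i \<in> borel_measurable N" "g i \<in> borel_measurable N" if "i < n" for i
    using that assms bfs_measurable[OF Y_bfs] Z_measurable by auto
  then have "(\<lambda>x. \<Sum>i<n. f i x * g i x) \<in> borel_measurable N" by auto
  with rep_finite_sum[of n f g] assms show ?thesis unfolding pi_set_def by blast
qed

lemma rep_scale:
  assumes r: "rep u f g"
  shows "rep (\<lambda>x. c * u x) (\<lambda>k x. c * f k x) g"
    and "(\<Sum>k. nY (\<lambda>x. c * f k x) * nZ (g k)) = \<bar>c\<bar> * (\<Sum>k. nY (f k) * nZ (g k))"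
proof -
  have f: "f k \<in> Y" for k using r unfolding pi_rep_def by auto
  have cost: "nY (\<lambda>x. c * f k x) * nZ (g k) = \<bar>c\<bar> * (nY (f k) * nZ (g k))" for k
    using bfs_scale[OF Y_bfs f] by simp
  have sm: "summable (\<lambda>k. nY (f k) * nZ (g k))" using r unfolding pi_rep_def by auto
  show "(\<Sum>k. nY (\<lambda>x. c * f k x) * nZ (g k)) = \<bar>c\<bar> * (\<Sum>k. nY (f k) * nZ (g k))"
    unfolding cost by (rule suminf_mult[OF sm])
  have "AE x in N. ennreal \<bar>u x\<bar> \<le> (\<Sum>k. ennreal \<bar>f k x * g k x\<bar>)"
    using r unfolding pi_rep_def by auto
  then have "AE x in N. ennreal \<bar>c * u x\<bar> \<le> (\<Sum>k. ennreal \<bar>c * f k x * g k x\<bar>)"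
  proof eventually_elim
    case (elim x)
    have "ennreal \<bar>c * u x\<bar> = ennreal \<bar>c\<bar> * ennreal \<bar>u x\<bar>"
      unfolding abs_mult by (rule ennreal_mult) auto
    also have "\<dots> \<le> ennreal \<bar>c\<bar> * (\<Sum>k. ennreal \<bar>f k x * g k x\<bar>)"
      using elim by (rule mult_left_mono) simp
    also have "\<dots> = (\<Sum>k. ennreal \<bar>c\<bar> * ennreal \<bar>f k x * g k x\<bar>)"
      by (rule ennreal_suminf_cmult[symmetric])
    also have "\<dots> = (\<Sum>k. ennreal \<bar>c * f k x * g k x\<bar>)"
      unfolding mult.assoc[of c] abs_mult[of c] by (subst ennreal_mult) auto
    finally show ?case .
  qed
  moreover have "summable (\<lambda>k. nY (\<lambda>x. c * f k x) * nZ (g k))"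
    unfolding cost by (rule summable_mult[OF sm])
  moreover have "(\<lambda>x. c * f k x) \<in> Y" for k
    using bfs_scale[OF Y_bfs f] by blast
  ultimately show "rep (\<lambda>x. c * u x) (\<lambda>k x. c * f k x) g"
    using r unfolding pi_rep_def by (simp add: mult.assoc)
qed

lemma rep_add:
  assumes r1: "rep u f g" and r2: "rep v f' g'"
  obtains F G where "rep (\<lambda>x. u x + v x) F G"
    and "(\<Sum>k. nY (F k) * nZ (G k)) = (\<Sum>k. nY (f k) * nZ (g k)) + (\<Sum>k. nY (f' k) * nZ (g' k))"
proof -
  define F where "F k = (if even k then f (k div 2) else f' (k div 2))" for k
  define G where "G k = (if even k then g (k div 2) else g' (k div 2))" for k
  have FG: "F k \<in> Y" "G k \<in> Z" for k using r1 r2 unfolding pi_rep_def F_def G_def by auto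
  have cost: "(\<lambda>k. nY (F k) * nZ (G k)) =
      (\<lambda>k. if even k then nY (f (k div 2)) * nZ (g (k div 2)) else nY (f' (k div 2)) * nZ (g' (k div 2)))"
    by (auto simp: F_def G_def)
  have cost_sums: "(\<lambda>k. nY (F k) * nZ (G k)) sums ((\<Sum>k. nY (f k) * nZ (g k)) + (\<Sum>k. nY (f' k) * nZ (g' k)))"
    unfolding cost using r1 r2 bfs_norm_nonneg[OF Y_bfs] Z_norm_nonneg
    by (intro sums_interleave_nonneg) (auto simp: pi_rep_def)
  have "AE x in N. ennreal \<bar>u x\<bar> \<le> (\<Sum>k. ennreal \<bar>f k x * g k x\<bar>)"
    and "AE x in N. ennreal \<bar>v x\<bar> \<le> (\<Sum>k. ennreal \<bar>f' k x * g' k x\<bar>)"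
    using r1 r2 unfolding pi_rep_def by auto
  then have "AE x in N. ennreal \<bar>u x + v x\<bar> \<le> (\<Sum>k. ennreal \<bar>F k x * G k x\<bar>)"
  proof eventually_elim
    case (elim x)
    have "ennreal \<bar>u x + v x\<bar> \<le> ennreal (\<bar>u x\<bar> + \<bar>v x\<bar>)"
      by (rule ennreal_leI) (rule abs_triangle_ineq)
    also have "\<dots> = ennreal \<bar>u x\<bar> + ennreal \<bar>v x\<bar>"
      by (rule ennreal_plus) simp_all
    also have "\<dots> \<le> (\<Sum>k. ennreal \<bar>f k x * g k x\<bar>) + (\<Sum>k. ennreal \<bar>f' k x * g' k x\<bar>)"
      using elim by (rule add_mono)
    also have "\<dots> = (\<Sum>k. ennreal \<bar>F k x * G k x\<bar>)"
      unfolding suminf_interleave_ennreal[symmetric] by (rule suminf_cong) (simp add: F_def G_def)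
    finally show ?case .
  qed
  then have "rep (\<lambda>x. u x + v x) F G"
    using FG cost_sums unfolding pi_rep_def by (auto simp: sums_iff)
  then show thesis
    by (rule that) (use cost_sums in \<open>simp add: sums_iff\<close>)
qed

lemma PS_lincomb:
  assumes "u \<in> PS" "v \<in> PS"
  shows "(\<lambda>x. a * u x + b * v x) \<in> PS"
proof -
  obtain f g f' g' where "rep u f g" "rep v f' g'" using assms unfolding pi_set_def by blast
  from rep_add[OF rep_scale(1)[OF this(1), of a] rep_scale(1)[OF this(2), of b]]
  obtain F G where "rep (\<lambda>x. a * u x + b * v x) F G" by blast
  moreover have "(\<lambda>x. a * u x + b * v x) \<in> borel_measurable N"
    using assms unfolding pi_set_def by auto
  ultimately show ?thesis unfolding pi_set_def by blast
qed

lemma pn_le_rep: "rep u f g \<Longrightarrow> pn u \<le> (\<Sum>k. nY (f k) * nZ (g k))"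
  unfolding pi_norm_def by (rule cInf_lower) (auto intro!: bdd_belowI[of _ 0] dest: rep_cost_nonneg)

lemma pn_greatest: "u \<in> PS \<Longrightarrow> (\<And>f g. rep u f g \<Longrightarrow> z \<le> (\<Sum>k. nY (f k) * nZ (g k))) \<Longrightarrow> z \<le> pn u"
  unfolding pi_norm_def pi_set_def by (rule cInf_greatest) auto

lemma pn_nonneg: "u \<in> PS \<Longrightarrow> 0 \<le> pn u"
  using pn_greatest rep_cost_nonneg by blast

lemma pn_add:
  assumes u: "u \<in> PS" and v: "v \<in> PS"
  shows "pn (\<lambda>x. u x + v x) \<le> pn u + pn v"
proof -
  have "pn (\<lambda>x. u x + v x) - (\<Sum>k. nY (f' k) * nZ (g' k)) \<le> pn u" if r2: "rep v f' g'" for f' g'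
  proof (rule pn_greatest[OF u])
    fix f g assume r1: "rep u f g"
    obtain F G where "rep (\<lambda>x. u x + v x) F G"
      "(\<Sum>k. nY (F k) * nZ (G k)) = (\<Sum>k. nY (f k) * nZ (g k)) + (\<Sum>k. nY (f' k) * nZ (g' k))"
      using rep_add[OF r1 r2] by blast
    with pn_le_rep[OF this(1)]
    show "pn (\<lambda>x. u x + v x) - (\<Sum>k. nY (f' k) * nZ (g' k)) \<le> (\<Sum>k. nY (f k) * nZ (g k))" by simp
  qed
  then have "pn (\<lambda>x. u x + v x) - pn u \<le> pn v"
    by (intro pn_greatest[OF v]) (auto simp: algebra_simps)
  then show ?thesis by simp
qed

lemma pn_scale_le:
  assumes u: "u \<in> PS"
  shows "pn (\<lambda>x. c * u x) \<le> \<bar>c\<bar> * pn u"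
proof (cases "c = 0")
  case True
  obtain f g where "rep u f g" using u unfolding pi_set_def by blast
  from pn_le_rep[OF rep_scale(1)[OF this, of c]] rep_scale(2)[OF this, of c] True show ?thesis by simp
next
  case False
  have "pn (\<lambda>x. c * u x) / \<bar>c\<bar> \<le> pn u"
  proof (rule pn_greatest[OF u])
    fix f g assume r: "rep u f g"
    from pn_le_rep[OF rep_scale(1)[OF r]] rep_scale(2)[OF r] False
    show "pn (\<lambda>x. c * u x) / \<bar>c\<bar> \<le> (\<Sum>k. nY (f k) * nZ (g k))"
      by (simp add: divide_le_eq mult.commute)
  qed
  then show ?thesis using False by (simp add: divide_le_eq mult.commute)
qed

lemma pn_pos_homogeneous:
  assumes u: "u \<in> PS" and "0 \<le> c"
  shows "pn (\<lambda>x. c * u x) = c * pn u"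
proof (cases "c = 0")
  case True
  then show ?thesis using pn_scale_le[OF u, of c] pn_nonneg PS_lincomb[OF u u, of 0 0] by force
next
  case False
  have "(\<lambda>x. c * u x) \<in> PS" using PS_lincomb[OF u u, of c 0] by simp
  from pn_scale_le[OF this, of "1/c"] False assms(2)
  have "c * pn u \<le> pn (\<lambda>x. c * u x)" by (simp add: field_simps)
  with pn_scale_le[OF u, of c] assms(2) show ?thesis by simp
qed

end

section \<open>Functionals on the \<open>\<pi>\<close>-product space\<close>

lemma sum_lessThan_concat:
  "(\<Sum>i<n + m. if i < n then f i else g (i - n)) = (\<Sum>i<n. f i) + (\<Sum>i<m. g i)"
  for f g :: "nat \<Rightarrow> 'a::comm_monoid_add"
  by (induction m) (simp_all add: add.assoc)

text \<open>The values which a functional \<open>\<xi>\<close> with \<open>\<beta> x y = \<xi> (F x * y)\<close> must take on finite sums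
  of elementary tensors.\<close>
definition tensor_graph :: "'c set \<Rightarrow> ('b \<Rightarrow> real) set \<Rightarrow> ('c \<Rightarrow> 'b \<Rightarrow> real)
    \<Rightarrow> ('c \<Rightarrow> ('b \<Rightarrow> real) \<Rightarrow> real) \<Rightarrow> (('b \<Rightarrow> real) \<times> real) set" where
  "tensor_graph A Z F \<beta> = {((\<lambda>\<omega>. \<Sum>i<n. F (x i) \<omega> * y i \<omega>), \<Sum>i<n. \<beta> (x i) (y i))
     | (n::nat) x y. (\<forall>i<n. x i \<in> A) \<and> (\<forall>i<n. y i \<in> Z)}"

lemma tensor_graphI:
  fixes n :: nat
  assumes "\<forall>i<n. x i \<in> A" "\<forall>i<n. y i \<in> Z"
  shows "((\<lambda>\<omega>. \<Sum>i<n. F (x i) \<omega> * y i \<omega>), \<Sum>i<n. \<beta> (x i) (y i)) \<in> tensor_graph A Z F \<beta>"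
  unfolding tensor_graph_def using assms by blast

lemma tensor_graphE:
  assumes "(u, v) \<in> tensor_graph A Z F \<beta>"
  obtains n :: nat and x y where "u = (\<lambda>\<omega>. \<Sum>i<n. F (x i) \<omega> * y i \<omega>)" "v = (\<Sum>i<n. \<beta> (x i) (y i))"
    "\<forall>i<n. x i \<in> A" "\<forall>i<n. y i \<in> Z"
  using assms unfolding tensor_graph_def by blast

lemma tensor_graph_lincomb:
  assumes Z_scale: "\<And>y c. y \<in> Z \<Longrightarrow> (\<lambda>\<omega>. c * y \<omega>) \<in> Z"
    and \<beta>_scale: "\<And>x y c. x \<in> A \<Longrightarrow> y \<in> Z \<Longrightarrow> \<beta> x (\<lambda>\<omega>. c * y \<omega>) = c * \<beta> x y"
    and "(u, v) \<in> tensor_graph A Z F \<beta>" "(u', v') \<in> tensor_graph A Z F \<beta>"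
  shows "((\<lambda>\<omega>. a * u \<omega> + b * u' \<omega>), a * v + b * v') \<in> tensor_graph A Z F \<beta>"
proof -
  obtain n :: nat and x y where uv: "u = (\<lambda>\<omega>. \<Sum>i<n. F (x i) \<omega> * y i \<omega>)"
    "v = (\<Sum>i<n. \<beta> (x i) (y i))" "\<forall>i<n. x i \<in> A" "\<forall>i<n. y i \<in> Z"
    using assms(3) by (rule tensor_graphE)
  obtain m :: nat and x' y' where uv': "u' = (\<lambda>\<omega>. \<Sum>i<m. F (x' i) \<omega> * y' i \<omega>)"
    "v' = (\<Sum>i<m. \<beta> (x' i) (y' i))" "\<forall>i<m. x' i \<in> A" "\<forall>i<m. y' i \<in> Z"
    using assms(4) by (rule tensor_graphE)
  define x'' where "x'' i = (if i < n then x i else x' (i - n))" for i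
  define y'' where "y'' i = (if i < n then (\<lambda>\<omega>. a * y i \<omega>) else (\<lambda>\<omega>. b * y' (i - n) \<omega>))" for i
  have "\<forall>i<n + m. x'' i \<in> A" "\<forall>i<n + m. y'' i \<in> Z"
    using uv uv' Z_scale unfolding x''_def y''_def by auto
  moreover have "(\<lambda>\<omega>. \<Sum>i<n + m. F (x'' i) \<omega> * y'' i \<omega>) = (\<lambda>\<omega>. a * u \<omega> + b * u' \<omega>)"
  proof
    fix \<omega>
    have "F (x'' i) \<omega> * y'' i \<omega> = (if i < n then a * (F (x i) \<omega> * y i \<omega>)
        else b * (F (x' (i - n)) \<omega> * y' (i - n) \<omega>))" for i
      unfolding x''_def y''_def by (simp add: mult.left_commute)
    then show "(\<Sum>i<n + m. F (x'' i) \<omega> * y'' i \<omega>) = a * u \<omega> + b * u' \<omega>"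
      using sum_lessThan_concat[where n=n and m=m and f="\<lambda>i. a * (F (x i) \<omega> * y i \<omega>)"
          and g="\<lambda>i. b * (F (x' i) \<omega> * y' i \<omega>)"]
      unfolding uv uv' by (simp add: sum_distrib_left)
  qed
  moreover have "(\<Sum>i<n + m. \<beta> (x'' i) (y'' i)) = a * v + b * v'"
  proof -
    have "(\<Sum>i<n + m. \<beta> (x'' i) (y'' i)) =
        (\<Sum>i<n + m. if i < n then a * \<beta> (x i) (y i) else b * \<beta> (x' (i - n)) (y' (i - n)))"
      by (rule sum.cong) (use uv uv' in \<open>auto simp: x''_def y''_def \<beta>_scale\<close>)
    then show ?thesis
      using sum_lessThan_concat[where n=n and m=m and f="\<lambda>i. a * \<beta> (x i) (y i)"
          and g="\<lambda>i. b * \<beta> (x' i) (y' i)"]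
      unfolding uv uv' by (simp add: sum_distrib_left)
  qed
  ultimately show ?thesis using tensor_graphI[of "n + m" x'' A y'' Z F \<beta>] by simp
qed

context pi_product
begin

lemma pi_dual_lincomb:
  "pi_dual N Y nY Z nZ \<xi> \<Longrightarrow> u \<in> PS \<Longrightarrow> v \<in> PS \<Longrightarrow> \<xi> (\<lambda>x. a * u x + b * v x) = a * \<xi> u + b * \<xi> v"
  unfolding pi_dual_def by blast

lemma pi_dual_sum:
  fixes n :: nat
  assumes \<xi>: "pi_dual N Y nY Z nZ \<xi>" and "\<And>i. i < n \<Longrightarrow> f i \<in> Y" "\<And>i. i < n \<Longrightarrow> g i \<in> Z"
  shows "\<xi> (\<lambda>x. \<Sum>i<n. f i x * g i x) = (\<Sum>i<n. \<xi> (\<lambda>x. f i x * g i x))"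
  using assms(2,3)
proof (induction n)
  case 0
  have "(\<lambda>_. 0) \<in> PS" using PS_finite_sum[of 0] by simp
  from pi_dual_lincomb[OF \<xi> this this, of 0 0] show ?case by simp
next
  case (Suc n)
  have "(\<lambda>x. \<Sum>i<n. f i x * g i x) \<in> PS" "(\<lambda>x. f n x * g n x) \<in> PS"
    using PS_finite_sum[of n f g] PS_finite_sum[of 1 "\<lambda>_. f n" "\<lambda>_. g n"] Suc.prems by auto
  from pi_dual_lincomb[OF \<xi> this, of 1 1] Suc show ?case by simp
qed

lemma pi_dual_if_dominated:
  assumes lin: "\<And>u v a b. u \<in> PS \<Longrightarrow> v \<in> PS \<Longrightarrow> \<xi> (\<lambda>x. a * u x + b * v x) = a * \<xi> u + b * \<xi> v"
    and dom: "\<And>u. u \<in> PS \<Longrightarrow> \<xi> u \<le> C * pn u" and C: "0 \<le> C"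
  shows "pi_dual N Y nY Z nZ \<xi>"
  unfolding pi_dual_def
proof (intro conjI ballI allI exI[of _ C])
  fix u v a b assume "u \<in> PS" "v \<in> PS"
  then show "\<xi> (\<lambda>x. a * u x + b * v x) = a * \<xi> u + b * \<xi> v" by (rule lin)
next
  fix u assume u: "u \<in> PS"
  have "\<xi> (\<lambda>x. (-1) * u x + 0 * u x) = (-1) * \<xi> u + 0 * \<xi> u"
    by (rule lin[OF u u])
  then have "- \<xi> u = \<xi> (\<lambda>x. (-1) * u x)" by simp
  also have "\<dots> \<le> C * pn (\<lambda>x. (-1) * u x)"
    using dom PS_lincomb[OF u u, of "-1" 0] by simp
  also have "\<dots> \<le> C * (\<bar>-1\<bar> * pn u)"
    using pn_scale_le[OF u, of "-1"] C by (intro mult_left_mono) auto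
  finally show "\<bar>\<xi> u\<bar> \<le> C * pn u" using dom[OF u] by simp
qed

context
  fixes A :: "'c set" and F :: "'c \<Rightarrow> 'b \<Rightarrow> real" and \<beta> :: "'c \<Rightarrow> ('b \<Rightarrow> real) \<Rightarrow> real"
  assumes F: "\<And>x. x \<in> A \<Longrightarrow> F x \<in> Y"
begin

lemma tensor_sum_in_PS:
  fixes n :: nat
  assumes "\<forall>i<n. x i \<in> A" "\<forall>i<n. y i \<in> Z"
  shows "(\<lambda>\<omega>. \<Sum>i<n. F (x i) \<omega> * y i \<omega>) \<in> PS"
  using PS_finite_sum[of n "\<lambda>i. F (x i)" y] assms F by blast

lemma bounded_on_tensors_if_pi_dual:
  assumes \<xi>: "pi_dual N Y nY Z nZ \<xi>" and \<beta>: "\<And>x y. x \<in> A \<Longrightarrow> y \<in> Z \<Longrightarrow> \<beta> x y = \<xi> (\<lambda>\<omega>. F x \<omega> * y \<omega>)"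
  shows "\<exists>C>0. \<forall>(n::nat) x y. (\<forall>i<n. x i \<in> A) \<longrightarrow> (\<forall>i<n. y i \<in> Z) \<longrightarrow>
     (\<Sum>i<n. \<beta> (x i) (y i)) \<le> C * pn (\<lambda>\<omega>. \<Sum>i<n. F (x i) \<omega> * y i \<omega>)"
proof -
  obtain K where K: "\<And>u. u \<in> PS \<Longrightarrow> \<bar>\<xi> u\<bar> \<le> K * pn u"
    using \<xi> unfolding pi_dual_def by blast
  have "(\<Sum>i<n. \<beta> (x i) (y i)) \<le> max K 1 * pn (\<lambda>\<omega>. \<Sum>i<n. F (x i) \<omega> * y i \<omega>)"
    if x: "\<forall>i<n. x i \<in> A" and y: "\<forall>i<n. y i \<in> Z" for n :: nat and x y
  proof -
    note u = tensor_sum_in_PS[OF x y]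
    have "(\<Sum>i<n. \<beta> (x i) (y i)) = \<xi> (\<lambda>\<omega>. \<Sum>i<n. F (x i) \<omega> * y i \<omega>)"
      using pi_dual_sum[OF \<xi>, of n "\<lambda>i. F (x i)" y] x y F \<beta> by simp
    also have "\<dots> \<le> K * pn (\<lambda>\<omega>. \<Sum>i<n. F (x i) \<omega> * y i \<omega>)"
      using K[OF u] by simp
    also have "\<dots> \<le> max K 1 * pn (\<lambda>\<omega>. \<Sum>i<n. F (x i) \<omega> * y i \<omega>)"
      using pn_nonneg[OF u] by (intro mult_right_mono) auto
    finally show ?thesis .
  qed
  then show ?thesis by (intro exI[of _ "max K 1"]) auto
qed

context
  assumes Z_scale: "\<And>y c. y \<in> Z \<Longrightarrow> (\<lambda>\<omega>. c * y \<omega>) \<in> Z"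
    and \<beta>_scale: "\<And>x y c. x \<in> A \<Longrightarrow> y \<in> Z \<Longrightarrow> \<beta> x (\<lambda>\<omega>. c * y \<omega>) = c * \<beta> x y"
begin

lemma dominated_linear_relation_tensor_graph:
  assumes bound: "\<And>(n::nat) x y. \<forall>i<n. x i \<in> A \<Longrightarrow> \<forall>i<n. y i \<in> Z \<Longrightarrow>
      (\<Sum>i<n. \<beta> (x i) (y i)) \<le> C * pn (\<lambda>\<omega>. \<Sum>i<n. F (x i) \<omega> * y i \<omega>)"
  shows "dominated_linear_relation PS (\<lambda>u. C * pn u) (tensor_graph A Z F \<beta>)"
  unfolding dominated_linear_relation_def
proof (intro conjI allI impI)
  show "tensor_graph A Z F \<beta> \<subseteq> PS \<times> UNIV"
  proof (safe intro!: SigmaI)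
    fix u v assume "(u, v) \<in> tensor_graph A Z F \<beta>"
    then show "u \<in> PS" by (rule tensor_graphE) (simp add: tensor_sum_in_PS)
  qed simp
  show "((\<lambda>_. 0), 0) \<in> tensor_graph A Z F \<beta>"
    using tensor_graphI[of 0] by simp
next
  fix f a g b \<alpha> \<beta>'
  assume fa: "(f, a) \<in> tensor_graph A Z F \<beta>" and gb: "(g, b) \<in> tensor_graph A Z F \<beta>"
  show "((\<lambda>x. \<alpha> * f x + \<beta>' * g x), \<alpha> * a + \<beta>' * b) \<in> tensor_graph A Z F \<beta>"
    using tensor_graph_lincomb[OF Z_scale \<beta>_scale fa gb] by simp
next
  fix f a assume "(f, a) \<in> tensor_graph A Z F \<beta>"
  then show "a \<le> C * pn f" by (rule tensor_graphE) (simp add: bound)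
qed

lemma pi_dual_if_bounded_on_tensors:
  assumes C: "C > 0" and bound: "\<And>(n::nat) x y. \<forall>i<n. x i \<in> A \<Longrightarrow> \<forall>i<n. y i \<in> Z \<Longrightarrow>
      (\<Sum>i<n. \<beta> (x i) (y i)) \<le> C * pn (\<lambda>\<omega>. \<Sum>i<n. F (x i) \<omega> * y i \<omega>)"
  obtains \<xi> where "pi_dual N Y nY Z nZ \<xi>"
    and "\<And>x y. x \<in> A \<Longrightarrow> y \<in> Z \<Longrightarrow> \<beta> x y = \<xi> (\<lambda>\<omega>. F x \<omega> * y \<omega>)"
proof -
  have C_pn_add: "C * pn (\<lambda>x. f x + g x) \<le> C * pn f + C * pn g" if "f \<in> PS" "g \<in> PS" for f g
    using pn_add[OF that] C by (simp add: distrib_left[symmetric])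
  have C_pn_scale: "C * pn (\<lambda>x. c * f x) = c * (C * pn f)" if "f \<in> PS" "0 \<le> c" for f c
    using pn_pos_homogeneous[OF that] by simp
  obtain \<xi> where lin: "\<And>f g a b. f \<in> PS \<Longrightarrow> g \<in> PS \<Longrightarrow> \<xi> (\<lambda>x. a * f x + b * g x) = a * \<xi> f + b * \<xi> g"
    and dom: "\<And>f. f \<in> PS \<Longrightarrow> \<xi> f \<le> C * pn f"
    and ext: "\<And>f a. (f, a) \<in> tensor_graph A Z F \<beta> \<Longrightarrow> \<xi> f = a"
    using hahn_banach_dominated_extension[OF PS_lincomb C_pn_add C_pn_scale
        dominated_linear_relation_tensor_graph[OF bound]] by blast
  have "pi_dual N Y nY Z nZ \<xi>"
    using pi_dual_if_dominated[OF lin dom less_imp_le[OF C]] .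
  moreover have "\<beta> x y = \<xi> (\<lambda>\<omega>. F x \<omega> * y \<omega>)" if "x \<in> A" "y \<in> Z" for x y
    using ext[OF tensor_graphI[of 1 "\<lambda>_. x" A "\<lambda>_. y" Z F \<beta>]] that by simp
  ultimately show thesis by (rule that)
qed

theorem pi_dual_iff_bounded_on_tensors:
  "(\<exists>C>0. \<forall>(n::nat) x y. (\<forall>i<n. x i \<in> A) \<longrightarrow> (\<forall>i<n. y i \<in> Z) \<longrightarrow>
      (\<Sum>i<n. \<beta> (x i) (y i)) \<le> C * pn (\<lambda>\<omega>. \<Sum>i<n. F (x i) \<omega> * y i \<omega>))
   \<longleftrightarrow> (\<exists>\<xi>. pi_dual N Y nY Z nZ \<xi> \<and> (\<forall>x\<in>A. \<forall>y\<in>Z. \<beta> x y = \<xi> (\<lambda>\<omega>. F x \<omega> * y \<omega>)))"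
proof
  assume "\<exists>C>0. \<forall>(n::nat) x y. (\<forall>i<n. x i \<in> A) \<longrightarrow> (\<forall>i<n. y i \<in> Z) \<longrightarrow>
    (\<Sum>i<n. \<beta> (x i) (y i)) \<le> C * pn (\<lambda>\<omega>. \<Sum>i<n. F (x i) \<omega> * y i \<omega>)"
  then obtain C where C: "C > 0" and bound: "\<And>(n::nat) x y. \<forall>i<n. x i \<in> A \<Longrightarrow> \<forall>i<n. y i \<in> Z \<Longrightarrow>
    (\<Sum>i<n. \<beta> (x i) (y i)) \<le> C * pn (\<lambda>\<omega>. \<Sum>i<n. F (x i) \<omega> * y i \<omega>)"
    by blast
  obtain \<xi> where "pi_dual N Y nY Z nZ \<xi>" "\<And>x y. x \<in> A \<Longrightarrow> y \<in> Z \<Longrightarrow> \<beta> x y = \<xi> (\<lambda>\<omega>. F x \<omega> * y \<omega>)"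
    using pi_dual_if_bounded_on_tensors[OF C bound] by blast
  then show "\<exists>\<xi>. pi_dual N Y nY Z nZ \<xi> \<and> (\<forall>x\<in>A. \<forall>y\<in>Z. \<beta> x y = \<xi> (\<lambda>\<omega>. F x \<omega> * y \<omega>))"
    by blast
next
  assume "\<exists>\<xi>. pi_dual N Y nY Z nZ \<xi> \<and> (\<forall>x\<in>A. \<forall>y\<in>Z. \<beta> x y = \<xi> (\<lambda>\<omega>. F x \<omega> * y \<omega>))"
  then obtain \<xi> where \<xi>: "pi_dual N Y nY Z nZ \<xi>" and "\<forall>x\<in>A. \<forall>y\<in>Z. \<beta> x y = \<xi> (\<lambda>\<omega>. F x \<omega> * y \<omega>)"
    by blast
  then show "\<exists>C>0. \<forall>(n::nat) x y. (\<forall>i<n. x i \<in> A) \<longrightarrow> (\<forall>i<n. y i \<in> Z) \<longrightarrow>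
      (\<Sum>i<n. \<beta> (x i) (y i)) \<le> C * pn (\<lambda>\<omega>. \<Sum>i<n. F (x i) \<omega> * y i \<omega>)"
    by (intro bounded_on_tensors_if_pi_dual[OF \<xi>]) simp
qed

end

end

end

theorem theorem3p1:
  fixes M :: "'a measure" and N :: "'b measure"
    and X1 X2 :: "('a \<Rightarrow> real) set" and nX1 nX2 :: "('a \<Rightarrow> real) \<Rightarrow> real"
    and Y1 Y2 :: "('b \<Rightarrow> real) set" and nY1 nY2 :: "('b \<Rightarrow> real) \<Rightarrow> real"
    and T S :: "('a \<Rightarrow> real) \<Rightarrow> ('b \<Rightarrow> real)" and h :: "'a \<Rightarrow> real"
  assumes "sigma_finite_measure M" and "sigma_finite_measure N"
    and "bfs M X1 nX1" and "saturated M X1"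
    and "bfs M X2 nX2" and "saturated M X2"
    and "bfs N Y1 nY1" and "saturated N Y1"
    and "bfs N Y2 nY2" and "saturated N Y2"
    and "bfs_op M X1 nX1 N Y1 nY1 T" and "nontrivial_op N X1 T"
    and "bfs_op M X2 nX2 N Y2 nY2 S" and "nontrivial_op N X2 S"
    and "saturated N (ydual N Y2 (kothe N (kothe N Y1)))"
    and "h \<in> ydual M X1 X2"
  shows "(\<exists>C>0. \<forall>(n::nat) (x::nat \<Rightarrow> 'a \<Rightarrow> real) (y::nat \<Rightarrow> 'b \<Rightarrow> real).
            (\<forall>i<n. x i \<in> X1) \<longrightarrow> (\<forall>i<n. y i \<in> kothe N Y1) \<longrightarrow>
            (\<Sum>i<n. \<integral>\<omega>. T (x i) \<omega> * y i \<omega> \<partial>N)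
              \<le> C * pi_norm N Y2 nY2 (kothe N Y1) (kothe_norm N Y1 nY1)
                     (\<lambda>\<omega>. \<Sum>i<n. S (\<lambda>t. h t * x i t) \<omega> * y i \<omega>))
     \<longleftrightarrow>
     (\<exists>\<xi>. pi_dual N Y2 nY2 (kothe N Y1) (kothe_norm N Y1 nY1) \<xi> \<and>
        (\<forall>x\<in>X1. \<forall>y\<in>kothe N Y1.
           (\<integral>\<omega>. T x \<omega> * y \<omega> \<partial>N) = \<xi> (\<lambda>\<omega>. S (\<lambda>t. h t * x t) \<omega> * y \<omega>)))"
proof -
  interpret pi_product N Y2 nY2 "kothe N Y1" "kothe_norm N Y1 nY1"
    using assms(7,9) kothe_zero kothe_norm_nonneg by unfold_locales (auto simp: kothe_iff)
  have S_Y2: "S (\<lambda>t. h t * x t) \<in> Y2" if "x \<in> X1" for x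
    using assms(13,16) that unfolding ydual_def bfs_op_def by blast
  have integral_scale: "(\<integral>\<omega>. T x \<omega> * (c * y \<omega>) \<partial>N) = c * (\<integral>\<omega>. T x \<omega> * y \<omega> \<partial>N)" for x y c
    by (simp add: mult.left_commute[of _ c])
  show ?thesis
    by (rule pi_dual_iff_bounded_on_tensors[where A=X1 and F="\<lambda>x. S (\<lambda>t. h t * x t)"
          and \<beta>="\<lambda>x y. \<integral>\<omega>. T x \<omega> * y \<omega> \<partial>N", OF S_Y2 kothe_scale integral_scale])
qed

end
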